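(* Let $\mathbf{Y}\sim\mathcal{SUT}_{d,m}(\boldsymbol{\xi},\boldsymbol{\Omega},\boldsymbol{\Delta},\boldsymbol{\tau},\bar{\boldsymbol{\Gamma}},\nu)$ with $d=d_1+d_2$, $d_1,d_2\ge1$, partitioned as $\mathbf{Y}=(\mathbf{Y}_1^\top,\mathbf{Y}_2^\top)^\top$, $\boldsymbol{\xi}=(\boldsymbol{\xi}_1^\top,\boldsymbol{\xi}_2^\top)^\top$, $\boldsymbol{\Omega}=(\boldsymbol{\Omega}_{ij})_{i,j=1,2}$, $\boldsymbol{\Delta}=(\boldsymbol{\Delta}_1^\top,\boldsymbol{\Delta}_2^\top)^\top$, with $\mathbf{Y}_i,\boldsymbol{\xi}_i\in\mathbb{R}^{d_i}$, $\boldsymbol{\Omega}_{ij}\in\mathbb{R}^{d_i\times d_j}$, $\boldsymbol{\Delta}_i\in\mathbb{R}^{d_i\times m}$; let $\boldsymbol{\omega}_i=\mathrm{diag}(\boldsymbol{\Omega}_{ii})^{1/2}$ and $\bar{\boldsymbol{\Omega}}_{ij}=\boldsymbol{\omega}_i^{-1}\boldsymbol{\Omega}_{ij}\boldsymbol{\omega}_j^{-1}$. Then the conditional distribution of $\mathbf{Y}_2$ given $\mathbf{Y}_1>\mathbf{0}$ (componentwise) is $$(\mathbf{Y}_2\mid\mathbf{Y}_1>\mathbf{0})\sim\mathcal{SUT}_{d_2,d_1+m}(\boldsymbol{\xi}_2,\boldsymbol{\Omega}_{22},\boldsymbol{\Delta}_{2\neg1},\boldsymbol{\tau}_{2\neg1},\bar{\boldsymbol{\Gamma}}_{2\neg1},\nu),$$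 where $\boldsymbol{\Delta}_{2\neg1}=\begin{pmatrix}\boldsymbol{\Delta}_2&\bar{\boldsymbol{\Omega}}_{21}\end{pmatrix}$, $\bar{\boldsymbol{\Gamma}}_{2\neg1}=\begin{pmatrix}\bar{\boldsymbol{\Gamma}}&\boldsymbol{\Delta}_1^\top\\ \boldsymbol{\Delta}_1&\bar{\boldsymbol{\Omega}}_{11}\end{pmatrix}$, and $\boldsymbol{\tau}_{2\neg1}=\begin{pmatrix}\boldsymbol{\tau}\\ \boldsymbol{\omega}_1^{-1}\boldsymbol{\xi}_1\end{pmatrix}$.
   Context: Notation: $\mathcal{T}_k(\boldsymbol{\mu},\boldsymbol{\Sigma},\nu)$ is the $k$-dimensional Student $t$ distribution with location $\boldsymbol{\mu}$, dispersion $\boldsymbol{\Sigma}$ and $\nu>0$ degrees of freedom. For dimension $p$ and latent dimension $q$: parameters are $\boldsymbol{\xi}\in\mathbb{R}^p$; $\boldsymbol{\Omega}$ a $p\times p$ positive definite matrix, $\boldsymbol{\omega}=\mathrm{diag}(\boldsymbol{\Omega})^{1/2}$, $\bar{\boldsymbol{\Omega}}=\boldsymbol{\omega}^{-1}\boldsymbol{\Omega}\boldsymbol{\omega}^{-1}$; $\boldsymbol{\Delta}$ a $p\times q$ matrix; $\bar{\boldsymbol{\Gamma}}$ a $q\times q$ correlation matrix; $\boldsymbol{\tau}\in\mathbb{R}^q$; $\nu>0$; with $\bar{\boldsymbol{\Omega}}^*=\begin{pmatrix}\bar{\boldsymbol{\Gamma}}&\boldsymbol{\Delta}^\top\\ \boldsymbol{\Delta}&\bar{\boldsymbol{\Omega}}\end{pmatrix}$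 positive definite. If $(\mathbf{U}_0^\top,\mathbf{U}_1^\top)^\top\sim\mathcal{T}_{q+p}(\mathbf{0},\bar{\boldsymbol{\Omega}}^*,\nu)$ ($\mathbf{U}_0\in\mathbb{R}^q$, $\mathbf{U}_1\in\mathbb{R}^p$) and $\mathbf{Z}$ has the conditional distribution of $\mathbf{U}_1$ given $\mathbf{U}_0+\boldsymbol{\tau}>\mathbf{0}$ (componentwise), then $\mathbf{Y}=\boldsymbol{\xi}+\boldsymbol{\omega}\mathbf{Z}$ has distribution $\mathcal{SUT}_{p,q}(\boldsymbol{\xi},\boldsymbol{\Omega},\boldsymbol{\Delta},\boldsymbol{\tau},\bar{\boldsymbol{\Gamma}},\nu)$. *)

theory Defs
  imports "HOL-Probability.Probability"
begin

text \<open>Matrices are real^'c^'r: A$i$j is the entry in row i, column j.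
  Dimensions are encoded by finite index types; block structure by sum types.\<close>

definition pos_def_mat :: "real^'n::finite^'n \<Rightarrow> bool" where
  "pos_def_mat A \<longleftrightarrow> transpose A = A \<and> (\<forall>x. x \<noteq> 0 \<longrightarrow> x \<bullet> (A *v x) > 0)"

definition corr_matrix :: "real^'n::finite^'n \<Rightarrow> bool" where
  "corr_matrix A \<longleftrightarrow> transpose A = A \<and> (\<forall>x. x \<bullet> (A *v x) \<ge> 0) \<and> (\<forall>i. A$i$i = 1)"

definition corr_of :: "real^'n::finite^'n \<Rightarrow> real^'n^'n" where
  "corr_of \<Omega> = (\<chi> i j. \<Omega>$i$j / (sqrt (\<Omega>$i$i) * sqrt (\<Omega>$j$j)))"

definition blockmat :: "real^'c1::finite^'r1::finite \<Rightarrow> real^'c2::finite^'r1 \<Rightarrow> real^'c1^'r2::finite \<Rightarrow> real^'c2^'r2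
    \<Rightarrow> real^('c1 + 'c2)^('r1 + 'r2)" where
  "blockmat A B C D = (\<chi> i j. case i of
      Inl a \<Rightarrow> (case j of Inl b \<Rightarrow> A$a$b | Inr b \<Rightarrow> B$a$b)
    | Inr a \<Rightarrow> (case j of Inl b \<Rightarrow> C$a$b | Inr b \<Rightarrow> D$a$b))"

definition hcat :: "real^'c1::finite^'r::finite \<Rightarrow> real^'c2::finite^'r \<Rightarrow> real^('c1 + 'c2)^'r" where
  "hcat A B = (\<chi> i j. case j of Inl b \<Rightarrow> A$i$b | Inr b \<Rightarrow> B$i$b)"

definition vjoin :: "real^'a::finite \<Rightarrow> real^'b::finite \<Rightarrow> real^('a + 'b)" where
  "vjoin u v = (\<chi> i. case i of Inl a \<Rightarrow> u$a | Inr b \<Rightarrow> v$b)"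

definition blk11 :: "real^('c1::finite + 'c2::finite)^('r1::finite + 'r2::finite) \<Rightarrow> real^'c1^'r1" where
  "blk11 M = (\<chi> i j. M$(Inl i)$(Inl j))"
definition blk12 :: "real^('c1::finite + 'c2::finite)^('r1::finite + 'r2::finite) \<Rightarrow> real^'c2^'r1" where
  "blk12 M = (\<chi> i j. M$(Inl i)$(Inr j))"
definition blk21 :: "real^('c1::finite + 'c2::finite)^('r1::finite + 'r2::finite) \<Rightarrow> real^'c1^'r2" where
  "blk21 M = (\<chi> i j. M$(Inr i)$(Inl j))"
definition blk22 :: "real^('c1::finite + 'c2::finite)^('r1::finite + 'r2::finite) \<Rightarrow> real^'c2^'r2" where
  "blk22 M = (\<chi> i j. M$(Inr i)$(Inr j))"
definition rows1 :: "real^'c::finite^('r1::finite + 'r2::finite) \<Rightarrow> real^'c^'r1" where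
  "rows1 M = (\<chi> i. M$(Inl i))"
definition rows2 :: "real^'c::finite^('r1::finite + 'r2::finite) \<Rightarrow> real^'c^'r2" where
  "rows2 M = (\<chi> i. M$(Inr i))"
definition vfst :: "real^('a::finite + 'b::finite) \<Rightarrow> real^'a" where
  "vfst v = (\<chi> i. v$(Inl i))"
definition vsnd :: "real^('a::finite + 'b::finite) \<Rightarrow> real^'b" where
  "vsnd v = (\<chi> i. v$(Inr i))"

definition student_t :: "real^'n::finite \<Rightarrow> real^'n^'n \<Rightarrow> real \<Rightarrow> (real^'n) measure" where
  "student_t \<mu> \<Sigma> \<nu> = density lborel (\<lambda>x. ennreal
     (Gamma ((\<nu> + real CARD('n)) / 2)
       / (Gamma (\<nu> / 2) * (\<nu> * pi) powr (real CARD('n) / 2) * sqrt (det \<Sigma>))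
       * (1 + ((x - \<mu>) \<bullet> (matrix_inv \<Sigma> *v (x - \<mu>))) / \<nu>) powr (- (\<nu> + real CARD('n)) / 2)))"

definition SUT_params :: "real^'p::finite^'p \<Rightarrow> real^'q::finite^'p \<Rightarrow> real^'q^'q \<Rightarrow> real \<Rightarrow> bool" where
  "SUT_params \<Omega> \<Delta> \<Gamma> \<nu> \<longleftrightarrow> pos_def_mat \<Omega> \<and> corr_matrix \<Gamma> \<and> \<nu> > 0 \<and>
     pos_def_mat (blockmat \<Gamma> (transpose \<Delta>) \<Delta> (corr_of \<Omega>))"

text \<open>Law of Y = xi + omega Z, Z = (U1 | U0 + tau > 0), (U0,U1) ~ T_{q+p}(0, Omega*, nu)\<close>
definition SUT :: "real^'p::finite \<Rightarrow> real^'p^'p \<Rightarrow> real^'q::finite^'p \<Rightarrow> real^'q \<Rightarrow> real^'q^'q \<Rightarrow> real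
    \<Rightarrow> (real^'p) measure" where
  "SUT \<xi> \<Omega> \<Delta> \<tau> \<Gamma> \<nu> =
     distr (uniform_measure
              (student_t (0 :: real^('q + 'p)) (blockmat \<Gamma> (transpose \<Delta>) \<Delta> (corr_of \<Omega>)) \<nu>)
              {u. \<forall>i. vfst u $ i + \<tau> $ i > 0})
           borel (\<lambda>u. \<chi> j. \<xi> $ j + sqrt (\<Omega> $ j $ j) * vsnd u $ j)"

end

theory Submission
  imports Defs
begin

(* Write Y = xi + omega Z, where Z is the U1-part of the latent t vector (U0, U1) conditioned on
   U0 + tau > 0, and split U1 = (U11, U12) like Y. Since omega has a positive diagonal, Y1 > 0 is
   the event U11 + omega1^-1 xi1 > 0, so conditioning on it as well makes Y2 = xi2 + omega2 U12 the
   image of the latent vector conditioned on (U0, U11) + tau_{2-1} > 0. Regrouping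
   (U0, (U11, U12)) as ((U0, U11), U12) permutes coordinates, which preserves Lebesgue measure,
   determinants and quadratic forms; hence the regrouped vector is again Student t, and its
   dispersion matrix is the SUT matrix built from Delta_{2-1} and Gamma_{2-1}. *)

definition reindex_vec :: "('n' \<Rightarrow> 'n) \<Rightarrow> 'a^'n::finite \<Rightarrow> 'a^'n'::finite" where
  "reindex_vec \<alpha> x = (\<chi> i. x $ \<alpha> i)"

definition reindex_mat :: "('n' \<Rightarrow> 'n) \<Rightarrow> 'a^'n::finite^'n \<Rightarrow> 'a^'n'::finite^'n'" where
  "reindex_mat \<alpha> A = (\<chi> i j. A $ \<alpha> i $ \<alpha> j)"

lemma reindex_vec_0 [simp]: "reindex_vec \<alpha> 0 = 0"
  by (simp add: reindex_vec_def vec_eq_iff)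

lemma reindex_vec_diff:
  fixes x y :: "'a::ab_group_add^'n::finite"
  shows "reindex_vec \<alpha> x - reindex_vec \<alpha> y = reindex_vec \<alpha> (x - y)"
  by (simp add: reindex_vec_def vec_eq_iff)

lemma reindex_mat_mult:
  fixes A B :: "'a::semiring_1^'n::finite^'n"
  assumes "bij (\<alpha> :: 'n'::finite \<Rightarrow> 'n)"
  shows "reindex_mat \<alpha> (A ** B) = reindex_mat \<alpha> A ** reindex_mat \<alpha> B"
proof -
  have "(\<Sum>k\<in>UNIV. A $ \<alpha> i $ \<alpha> k * B $ \<alpha> k $ \<alpha> j) = (\<Sum>k\<in>UNIV. A $ \<alpha> i $ k * B $ k $ \<alpha> j)" for i j
    using sum.reindex_bij_betw[OF assms, of "\<lambda>k. A $ \<alpha> i $ k * B $ k $ \<alpha> j"] by simp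
  then show ?thesis by (simp add: reindex_mat_def matrix_matrix_mult_def vec_eq_iff)
qed

lemma reindex_mat_1:
  assumes "bij (\<alpha> :: 'n'::finite \<Rightarrow> 'n::finite)"
  shows "reindex_mat \<alpha> (mat 1) = (mat 1 :: 'a::semiring_1^'n'^'n')"
  using assms by (auto simp: reindex_mat_def mat_def vec_eq_iff bij_def inj_eq)

lemma matrix_inv_unique:
  fixes A B :: "'a::semiring_1^'n::finite^'n"
  assumes "A ** B = mat 1" "B ** A = mat 1"
  shows "matrix_inv A = B"
  unfolding matrix_inv_def
proof (rule some_equality)
  fix C assume C: "A ** C = mat 1 \<and> C ** A = mat 1"
  have "C = C ** (A ** B)" using assms by (simp add: matrix_mul_rid)
  also have "\<dots> = (C ** A) ** B" by (simp add: matrix_mul_assoc)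
  also have "\<dots> = B" using C by (simp add: matrix_mul_lid)
  finally show "C = B" .
qed (use assms in auto)

lemma matrix_inv_reindex_mat:
  fixes A :: "'a::semiring_1^'n::finite^'n"
  assumes "bij (\<alpha> :: 'n'::finite \<Rightarrow> 'n)" "invertible A"
  shows "matrix_inv (reindex_mat \<alpha> A) = reindex_mat \<alpha> (matrix_inv A)"
proof -
  obtain B where B: "A ** B = mat 1" "B ** A = mat 1"
    using assms(2) invertible_def by blast
  have "matrix_inv (reindex_mat \<alpha> A) = reindex_mat \<alpha> B"
    by (rule matrix_inv_unique)
      (simp_all add: reindex_mat_mult[OF assms(1), symmetric] B reindex_mat_1[OF assms(1)])
  with matrix_inv_unique[OF B] show ?thesis by simp
qed

lemma quadratic_form_reindex:
  fixes x :: "real^'n::finite"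
  assumes "bij (\<alpha> :: 'n'::finite \<Rightarrow> 'n)"
  shows "reindex_vec \<alpha> x \<bullet> (reindex_mat \<alpha> B *v reindex_vec \<alpha> x) = x \<bullet> (B *v x)"
proof -
  have "(\<Sum>k\<in>UNIV. B $ \<alpha> i $ \<alpha> k * x $ \<alpha> k) = (\<Sum>k\<in>UNIV. B $ \<alpha> i $ k * x $ k)" for i
    using sum.reindex_bij_betw[OF assms, of "\<lambda>k. B $ \<alpha> i $ k * x $ k"] by simp
  then have "reindex_vec \<alpha> x \<bullet> (reindex_mat \<alpha> B *v reindex_vec \<alpha> x)
      = (\<Sum>i\<in>UNIV. x $ \<alpha> i * (\<Sum>k\<in>UNIV. B $ \<alpha> i $ k * x $ k))"
    by (simp add: reindex_mat_def reindex_vec_def inner_vec_def matrix_vector_mult_def)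
  also have "\<dots> = (\<Sum>i\<in>UNIV. x $ i * (\<Sum>k\<in>UNIV. B $ i $ k * x $ k))"
    using sum.reindex_bij_betw[OF assms, of "\<lambda>i. x $ i * (\<Sum>k\<in>UNIV. B $ i $ k * x $ k)"] by simp
  also have "\<dots> = x \<bullet> (B *v x)"
    by (simp add: inner_vec_def matrix_vector_mult_def)
  finally show ?thesis .
qed

lemma det_reindex_mat:
  fixes A :: "'a::comm_ring_1^'n::finite^'n"
  assumes "bij (\<alpha> :: 'n'::finite \<Rightarrow> 'n)"
  shows "det (reindex_mat \<alpha> A) = det A"
proof -
  let ?conj = "\<lambda>\<pi> x. \<alpha> (\<pi> (inv \<alpha> x))"
  have bij_conj: "bij_betw ?conj {\<pi>. \<pi> permutes UNIV} {\<pi>. \<pi> permutes UNIV}"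
    using bij_betw_permutations[OF assms] by simp
  have sign_conj: "sign (?conj \<pi>) = sign \<pi>" if "\<pi> permutes UNIV" for \<pi>
  proof -
    have "?conj \<pi> = map_permutation UNIV \<alpha> \<pi>"
      using assms by (auto simp: map_permutation_def restrict_id_def fun_eq_iff bij_def)
    then show ?thesis
      using sign_map_permutation[of \<alpha> UNIV \<pi>] that assms by (simp add: bij_def)
  qed
  have prod_conj: "(\<Prod>j\<in>UNIV. A $ j $ ?conj \<pi> j) = (\<Prod>i\<in>UNIV. A $ \<alpha> i $ \<alpha> (\<pi> i))" for \<pi>
    using prod.reindex_bij_betw[OF assms, of "\<lambda>j. A $ j $ ?conj \<pi> j"] assms
    by (simp add: bij_def inv_f_f)
  have "det A = (\<Sum>\<pi>\<in>{\<pi>. \<pi> permutes UNIV}. of_int (sign (?conj \<pi>)) * (\<Prod>j\<in>UNIV. A $ j $ ?conj \<pi> j))"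
    unfolding det_def
    using sum.reindex_bij_betw[OF bij_conj, of "\<lambda>p. of_int (sign p) * (\<Prod>j\<in>UNIV. A $ j $ p j)"]
    by simp
  also have "\<dots> = (\<Sum>\<pi>\<in>{\<pi>. \<pi> permutes UNIV}. of_int (sign \<pi>) * (\<Prod>i\<in>UNIV. A $ \<alpha> i $ \<alpha> (\<pi> i)))"
    by (rule sum.cong) (simp_all add: sign_conj prod_conj)
  also have "\<dots> = det (reindex_mat \<alpha> A)"
    by (simp add: det_def reindex_mat_def)
  finally show ?thesis by simp
qed

lemma continuous_on_reindex_vec: "continuous_on S (reindex_vec \<alpha> :: 'a::topological_space^'n::finite \<Rightarrow> 'a^'n'::finite)"
  unfolding reindex_vec_def by (intro continuous_on_vec_lambda continuous_on_component continuous_on_id)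

lemma measurable_reindex_vec [measurable]:
  "(reindex_vec \<alpha> :: real^'n::finite \<Rightarrow> real^'n'::finite) \<in> borel_measurable borel"
  by (rule borel_measurable_continuous_onI[OF continuous_on_reindex_vec])

lemma prod_Basis_vec: "(\<Prod>b\<in>(Basis :: (real^'n::finite) set). f b) = (\<Prod>i\<in>UNIV. f (axis i 1))"
proof -
  have "(Basis :: (real^'n) set) = range (\<lambda>i. axis i 1)"
    by (auto simp: Basis_vec_def)
  moreover have "inj (\<lambda>i::'n. axis i (1::real))"
    by (auto simp: inj_def axis_eq_axis)
  ultimately show ?thesis
    using prod.reindex[of "\<lambda>i::'n. axis i (1::real)" UNIV f] by simp
qed

lemma distr_lborel_reindex_vec:
  assumes "bij (\<alpha> :: 'n'::finite \<Rightarrow> 'n::finite)"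
  shows "distr lborel borel (reindex_vec \<alpha>) = (lborel :: (real^'n') measure)"
proof (rule lborel_eqI[symmetric])
  fix l u :: "real^'n'"
  assume le_Basis: "\<And>b. b \<in> Basis \<Longrightarrow> l \<bullet> b \<le> u \<bullet> b"
  have le: "l $ i \<le> u $ i" for i
    using le_Basis[of "axis i 1"] by (auto simp: Basis_vec_def inner_axis)
  let ?l = "reindex_vec (inv \<alpha>) l" and ?u = "reindex_vec (inv \<alpha>) u"
  have "(\<forall>i. l $ i < x $ \<alpha> i \<and> x $ \<alpha> i < u $ i) \<longleftrightarrow> (\<forall>j. ?l $ j < x $ j \<and> x $ j < ?u $ j)" for x
    using assms by (simp add: reindex_vec_def) (metis bij_inv_eq_iff)
  then have preimage: "reindex_vec \<alpha> -` box l u = box ?l ?u"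
    by (auto simp: mem_box_cart reindex_vec_def)
  have "\<forall>b\<in>Basis. ?l \<bullet> b \<le> ?u \<bullet> b"
    using le by (auto simp: Basis_vec_def inner_axis reindex_vec_def)
  then have "emeasure (distr lborel borel (reindex_vec \<alpha>)) (box l u) = (\<Prod>j\<in>UNIV. (?u - ?l) $ j)"
    by (simp add: emeasure_distr preimage emeasure_lborel_box_eq prod_Basis_vec inner_axis)
  also have "\<dots> = (\<Prod>i\<in>UNIV. (u - l) $ i)"
    using prod.reindex_bij_betw[OF assms, of "\<lambda>j. (?u - ?l) $ j"] assms
    by (simp add: reindex_vec_def bij_def inv_f_f)
  finally show "emeasure (distr lborel borel (reindex_vec \<alpha>)) (box l u) = (\<Prod>b\<in>Basis. (u - l) \<bullet> b)"
    by (simp add: prod_Basis_vec inner_axis)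
qed simp

definition student_t_density :: "real^'n::finite \<Rightarrow> real^'n^'n \<Rightarrow> real \<Rightarrow> real^'n \<Rightarrow> ennreal" where
  "student_t_density \<mu> \<Sigma> \<nu> x = ennreal
     (Gamma ((\<nu> + real CARD('n)) / 2)
       / (Gamma (\<nu> / 2) * (\<nu> * pi) powr (real CARD('n) / 2) * sqrt (det \<Sigma>))
       * (1 + ((x - \<mu>) \<bullet> (matrix_inv \<Sigma> *v (x - \<mu>))) / \<nu>) powr (- (\<nu> + real CARD('n)) / 2))"

lemma measurable_student_t_density [measurable]: "student_t_density \<mu> \<Sigma> \<nu> \<in> borel_measurable borel"
proof -
  have [measurable]: "(\<lambda>x. (x - \<mu>) \<bullet> (matrix_inv \<Sigma> *v (x - \<mu>))) \<in> borel_measurable borel"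
    by (intro borel_measurable_continuous_onI continuous_intros
        matrix_vector_mult_linear_continuous_on[THEN continuous_on_compose2]) auto
  show ?thesis
    unfolding student_t_density_def by measurable
qed

lemma student_t_eq_density: "student_t \<mu> \<Sigma> \<nu> = density lborel (student_t_density \<mu> \<Sigma> \<nu>)"
  unfolding student_t_def student_t_density_def[abs_def] ..

lemma distr_student_t_reindex_vec:
  assumes "bij (\<alpha> :: 'n'::finite \<Rightarrow> 'n::finite)" "invertible \<Sigma>"
  shows "distr (student_t \<mu> \<Sigma> \<nu>) borel (reindex_vec \<alpha>)
       = student_t (reindex_vec \<alpha> \<mu>) (reindex_mat \<alpha> \<Sigma>) \<nu>"
proof -
  let ?f = "student_t_density (reindex_vec \<alpha> \<mu>) (reindex_mat \<alpha> \<Sigma>) \<nu>"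
  have "CARD('n') = CARD('n)"
    using assms(1) by (simp add: bij_betw_same_card)
  then have density_reindex: "?f (reindex_vec \<alpha> x) = student_t_density \<mu> \<Sigma> \<nu> x" for x
    by (simp add: student_t_density_def reindex_vec_diff det_reindex_mat[OF assms(1)]
        matrix_inv_reindex_mat[OF assms] quadratic_form_reindex[OF assms(1)])
  have "student_t (reindex_vec \<alpha> \<mu>) (reindex_mat \<alpha> \<Sigma>) \<nu> = density (distr lborel borel (reindex_vec \<alpha>)) ?f"
    by (simp add: student_t_eq_density distr_lborel_reindex_vec[OF assms(1)])
  also have "\<dots> = distr (density lborel (\<lambda>x. ?f (reindex_vec \<alpha> x))) borel (reindex_vec \<alpha>)"
    by (rule density_distr) measurable
  finally show ?thesis
    by (simp add: density_reindex student_t_eq_density)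
qed

lemma ennreal_divide_divide_cancel:
  fixes a b c :: ennreal
  assumes "c \<noteq> 0" "c \<noteq> \<infinity>"
  shows "(a / c) / (b / c) = a / b"
proof -
  obtain r where c: "c = ennreal r" "r > 0"
    using assms by (cases c) (auto simp: ennreal_eq_0_iff not_le)
  have "inverse (b * ennreal (inverse r)) = inverse b * ennreal r"
    using c by (subst ennreal_inverse_mult') (auto simp: inverse_ennreal)
  moreover have "ennreal (inverse r) * ennreal r = 1"
    using c by (simp flip: ennreal_mult)
  ultimately show ?thesis
    using c by (simp add: divide_ennreal_def inverse_ennreal mult.assoc mult.left_commute[of "ennreal (inverse r)"])
qed

lemma uniform_measure_distr:
  assumes [measurable]: "X \<in> measurable M N" "B \<in> sets N"
  shows "uniform_measure (distr M N X) B = distr (uniform_measure M (X -` B \<inter> space M)) N X"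
proof -
  have "uniform_measure (distr M N X) B
      = distr (density M (\<lambda>x. indicator B (X x) / emeasure (distr M N X) B)) N X"
    unfolding uniform_measure_def by (rule density_distr) measurable
  also have "density M (\<lambda>x. indicator B (X x) / emeasure (distr M N X) B)
      = density M (\<lambda>x. indicator (X -` B \<inter> space M) x / emeasure M (X -` B \<inter> space M))"
    by (rule density_cong) (auto simp: emeasure_distr split: split_indicator)
  finally show ?thesis by (simp add: uniform_measure_def)
qed

lemma uniform_measure_uniform_measure:
  assumes [measurable]: "C \<in> sets M" "E \<in> sets M"
    and "emeasure M C \<noteq> 0" "emeasure M C \<noteq> \<infinity>"
  shows "uniform_measure (uniform_measure M C) E = uniform_measure M (C \<inter> E)"
proof (rule measure_eqI)
  fix S assume "S \<in> sets (uniform_measure (uniform_measure M C) E)"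
  then have [measurable]: "S \<in> sets M" by simp
  show "emeasure (uniform_measure (uniform_measure M C) E) S = emeasure (uniform_measure M (C \<inter> E)) S"
    using assms by (simp add: ennreal_divide_divide_cancel Int_assoc Int_commute Int_left_commute)
qed simp

lemma prob_space_distr_uniform_measureD:
  assumes "prob_space (distr (uniform_measure M C) N g)" "g \<in> measurable M N" "C \<in> sets M"
  shows "emeasure M C \<noteq> 0" "emeasure M C \<noteq> \<infinity>"
proof -
  have "1 = emeasure (distr (uniform_measure M C) N g) (space N)"
    using prob_space.emeasure_space_1[OF assms(1)] by simp
  also have "\<dots> = emeasure M (C \<inter> (g -` space N \<inter> space M)) / emeasure M C"
    using assms(2,3) by (simp add: emeasure_distr cong: measurable_cong_sets)
  also have "C \<inter> (g -` space N \<inter> space M) = C"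
    using sets.sets_into_space[OF assms(3)] measurable_space[OF assms(2)] by auto
  finally show "emeasure M C \<noteq> 0" "emeasure M C \<noteq> \<infinity>"
    by auto \<comment> \<open>in \<open>ennreal\<close>, both \<open>0 / 0\<close> and \<open>\<infinity> / \<infinity>\<close> are \<open>0\<close>\<close>
qed

lemma distr_uniform_measure_preimage:
  assumes law: "distr M N Y = distr (uniform_measure T C) N g"
    and [measurable]: "Y \<in> measurable M N" "g \<in> measurable T N" "h \<in> measurable N K"
      "C \<in> sets T" "B \<in> sets N"
    and "emeasure T C \<noteq> 0" "emeasure T C \<noteq> \<infinity>"
  shows "distr (uniform_measure M (Y -` B \<inter> space M)) K (h \<circ> Y)
       = distr (uniform_measure T (C \<inter> g -` B \<inter> space T)) K (h \<circ> g)"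
proof -
  have [measurable]: "g \<in> measurable (uniform_measure T C) N"
    by (simp cong: measurable_cong_sets)
  have "distr (uniform_measure M (Y -` B \<inter> space M)) K (h \<circ> Y)
      = distr (uniform_measure (distr M N Y) B) K h"
    by (simp add: uniform_measure_distr distr_distr cong: measurable_cong_sets)
  also have "\<dots> = distr (uniform_measure (uniform_measure T C) (g -` B \<inter> space T)) K (h \<circ> g)"
    unfolding law by (simp add: uniform_measure_distr distr_distr cong: measurable_cong_sets)
  also have "\<dots> = distr (uniform_measure T (C \<inter> g -` B \<inter> space T)) K (h \<circ> g)"
    using assms(7,8) by (simp add: uniform_measure_uniform_measure Int_assoc)
  finally show ?thesis .
qed

lemma pos_def_mat_invertible:
  assumes "pos_def_mat (A :: real^'n::finite^'n)"
  shows "invertible A"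
proof -
  have "\<forall>x. A *v x = 0 \<longrightarrow> x = 0"
    using assms unfolding pos_def_mat_def by (metis inner_zero_right less_irrefl)
  then show ?thesis
    using matrix_left_invertible_ker invertible_left_inverse by blast
qed

lemma pos_def_mat_diag_pos:
  assumes "pos_def_mat (A :: real^'n::finite^'n)"
  shows "A $ i $ i > 0"
proof -
  have "axis i 1 \<bullet> (A *v axis i 1) > 0"
    using assms unfolding pos_def_mat_def by (metis axis_eq_0_iff zero_neq_one)
  moreover have "axis i 1 \<bullet> (A *v axis i 1) = A $ i $ i"
    by (simp add: inner_vec_def matrix_vector_mult_def axis_def if_distrib[where f="\<lambda>x. x * _"]
        if_distrib[where f="\<lambda>x. _ * x"] cong: if_cong)
  ultimately show ?thesis by simp
qed

lemma pos_def_mat_symmetric: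
  assumes "pos_def_mat (A :: real^'n::finite^'n)"
  shows "A $ i $ j = A $ j $ i"
  using assms unfolding pos_def_mat_def by (metis transpose_def vec_lambda_beta)

fun sum_assoc :: "('a + 'b) + 'c \<Rightarrow> 'a + ('b + 'c)" where
  "sum_assoc (Inl (Inl a)) = Inl a"
| "sum_assoc (Inl (Inr b)) = Inr (Inl b)"
| "sum_assoc (Inr c) = Inr (Inr c)"

lemma bij_sum_assoc: "bij sum_assoc"
  by (rule bij_betw_byWitness[where f'="\<lambda>y. case y of Inl a \<Rightarrow> Inl (Inl a)
      | Inr (Inl b) \<Rightarrow> Inl (Inr b) | Inr (Inr c) \<Rightarrow> Inr c"])
    (auto simp: split_sum_all split: sum.splits)

lemma reindex_mat_sum_assoc_blockmat:
  assumes "\<And>i j. \<Omega> $ i $ j = \<Omega> $ j $ i"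
  shows "reindex_mat sum_assoc (blockmat \<Gamma> (transpose \<Delta>) \<Delta> (corr_of \<Omega>))
       = blockmat (blockmat \<Gamma> (transpose (rows1 \<Delta>)) (rows1 \<Delta>) (blk11 (corr_of \<Omega>)))
           (transpose (hcat (rows2 \<Delta>) (blk21 (corr_of \<Omega>)))) (hcat (rows2 \<Delta>) (blk21 (corr_of \<Omega>)))
           (corr_of (blk22 \<Omega>))"
  unfolding vec_eq_iff \<comment> \<open>symmetry identifies the transposed block \<open>blk21\<close> with \<open>blk12\<close>\<close>
  by (auto simp: reindex_mat_def split_sum_all blockmat_def transpose_def rows1_def rows2_def
      blk11_def blk21_def blk22_def hcat_def corr_of_def assms mult.commute split: sum.splits)

lemma continuous_on_vfst [continuous_intros]: "continuous_on S (vfst :: real^('a::finite + 'b::finite) \<Rightarrow> _)"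
  unfolding vfst_def by (intro continuous_on_vec_lambda continuous_on_component continuous_on_id)

lemma continuous_on_vsnd [continuous_intros]: "continuous_on S (vsnd :: real^('a::finite + 'b::finite) \<Rightarrow> _)"
  unfolding vsnd_def by (intro continuous_on_vec_lambda continuous_on_component continuous_on_id)

lemma measurable_vfst [measurable]: "(vfst :: real^('a::finite + 'b::finite) \<Rightarrow> _) \<in> borel_measurable borel"
  by (intro borel_measurable_continuous_onI continuous_on_vfst)

lemma measurable_vsnd [measurable]: "(vsnd :: real^('a::finite + 'b::finite) \<Rightarrow> _) \<in> borel_measurable borel"
  by (intro borel_measurable_continuous_onI continuous_on_vsnd)

definition SUT_latent :: "real^'p::finite^'p \<Rightarrow> real^'q::finite^'p \<Rightarrow> real^'q^'q \<Rightarrow> real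
    \<Rightarrow> (real^('q + 'p)) measure" where
  "SUT_latent \<Omega> \<Delta> \<Gamma> \<nu> = student_t 0 (blockmat \<Gamma> (transpose \<Delta>) \<Delta> (corr_of \<Omega>)) \<nu>"

definition SUT_selection :: "real^'q::finite \<Rightarrow> (real^('q + 'p::finite)) set" where
  "SUT_selection \<tau> = {u. \<forall>i. vfst u $ i + \<tau> $ i > 0}"

definition SUT_location_scale :: "real^'p::finite \<Rightarrow> real^'p^'p \<Rightarrow> real^('q::finite + 'p) \<Rightarrow> real^'p" where
  "SUT_location_scale \<xi> \<Omega> u = (\<chi> j. \<xi> $ j + sqrt (\<Omega> $ j $ j) * vsnd u $ j)"

lemma SUT_eq:
  "SUT \<xi> \<Omega> \<Delta> \<tau> \<Gamma> \<nu>
     = distr (uniform_measure (SUT_latent \<Omega> \<Delta> \<Gamma> \<nu>) (SUT_selection \<tau>)) borel (SUT_location_scale \<xi> \<Omega>)"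
  by (simp add: SUT_def SUT_latent_def SUT_selection_def SUT_location_scale_def[abs_def])

lemma space_SUT_latent [simp]: "space (SUT_latent \<Omega> \<Delta> \<Gamma> \<nu>) = UNIV"
  and sets_SUT_latent [simp]: "sets (SUT_latent \<Omega> \<Delta> \<Gamma> \<nu>) = sets borel"
  by (simp_all add: SUT_latent_def student_t_def)

lemma measurable_SUT_latent [simp]: "measurable (SUT_latent \<Omega> \<Delta> \<Gamma> \<nu>) N = measurable borel N"
  by (rule measurable_cong_sets) simp_all

lemma SUT_selection_sets [measurable]: "SUT_selection \<tau> \<in> sets borel"
  unfolding SUT_selection_def by measurable

lemma measurable_SUT_location_scale [measurable]: "SUT_location_scale \<xi> \<Omega> \<in> borel_measurable borel"
  unfolding SUT_location_scale_def[abs_def]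
  by (intro borel_measurable_continuous_onI continuous_intros)

lemma distr_SUT_latent_reindex_sum_assoc:
  assumes "SUT_params \<Omega> \<Delta> \<Gamma> \<nu>"
  shows "distr (SUT_latent \<Omega> \<Delta> \<Gamma> \<nu>) borel (reindex_vec sum_assoc)
       = SUT_latent (blk22 \<Omega>) (hcat (rows2 \<Delta>) (blk21 (corr_of \<Omega>)))
           (blockmat \<Gamma> (transpose (rows1 \<Delta>)) (rows1 \<Delta>) (blk11 (corr_of \<Omega>))) \<nu>"
proof -
  have "pos_def_mat \<Omega>" and dispersion: "pos_def_mat (blockmat \<Gamma> (transpose \<Delta>) \<Delta> (corr_of \<Omega>))"
    using assms by (simp_all add: SUT_params_def)
  then have "\<And>i j. \<Omega> $ i $ j = \<Omega> $ j $ i"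
    by (simp add: pos_def_mat_symmetric)
  then show ?thesis
    unfolding SUT_latent_def
    using distr_student_t_reindex_vec[OF bij_sum_assoc pos_def_mat_invertible[OF dispersion], of 0 \<nu>]
    by (simp add: reindex_mat_sum_assoc_blockmat)
qed

lemma SUT_selection_reindex_sum_assoc:
  assumes "\<And>i. \<Omega> $ Inl i $ Inl i > 0"
  shows "reindex_vec sum_assoc -` SUT_selection (vjoin \<tau> (\<chi> i. vfst \<xi> $ i / sqrt (\<Omega> $ Inl i $ Inl i)))
       = SUT_selection \<tau> \<inter> SUT_location_scale \<xi> \<Omega> -` {y. \<forall>i. vfst y $ i > 0}"
proof -
  have "x + y / sqrt (\<Omega> $ Inl i $ Inl i) > 0 \<longleftrightarrow> y + sqrt (\<Omega> $ Inl i $ Inl i) * x > 0" for x y i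
    using assms[of i] by (simp add: field_simps)
  then show ?thesis
    by (auto simp: SUT_selection_def SUT_location_scale_def reindex_vec_def vfst_def vsnd_def
        vjoin_def split_sum_all)
qed

lemma SUT_location_scale_reindex_sum_assoc:
  "SUT_location_scale (vsnd \<xi>) (blk22 \<Omega>) \<circ> reindex_vec sum_assoc = vsnd \<circ> SUT_location_scale \<xi> \<Omega>"
  by (simp add: SUT_location_scale_def reindex_vec_def vsnd_def blk22_def fun_eq_iff)

theorem proposition10:
  fixes M :: "'s measure"
    and Y :: "'s \<Rightarrow> real^('d1::finite + 'd2::finite)"
    and \<xi> :: "real^('d1 + 'd2)"
    and \<Omega> :: "real^('d1 + 'd2)^('d1 + 'd2)"
    and \<Delta> :: "real^('m::finite)^('d1 + 'd2)"
    and \<tau> :: "real^'m"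
    and \<Gamma> :: "real^'m^'m"
    and \<nu> :: real
  assumes "prob_space M"
    and "Y \<in> borel_measurable M"
    and "SUT_params \<Omega> \<Delta> \<Gamma> \<nu>"
    and "distr M borel Y = SUT \<xi> \<Omega> \<Delta> \<tau> \<Gamma> \<nu>"
  shows "distr (uniform_measure M {x \<in> space M. \<forall>i. vfst (Y x) $ i > 0}) borel (\<lambda>x. vsnd (Y x))
       = SUT (vsnd \<xi>) (blk22 \<Omega>)
             (hcat (rows2 \<Delta>) (blk21 (corr_of \<Omega>)))
             (vjoin \<tau> (\<chi> i. vfst \<xi> $ i / sqrt (\<Omega> $ Inl i $ Inl i)))
             (blockmat \<Gamma> (transpose (rows1 \<Delta>)) (rows1 \<Delta>) (blk11 (corr_of \<Omega>)))
             \<nu>"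
proof -
  note [measurable] = assms(2)
  let ?L = "SUT_latent \<Omega> \<Delta> \<Gamma> \<nu>" and ?B = "{y :: real^('d1 + 'd2). \<forall>i. vfst y $ i > 0}"
    and ?\<tau>' = "vjoin \<tau> (\<chi> i. vfst \<xi> $ i / sqrt (\<Omega> $ Inl i $ Inl i))"
  have law: "distr M borel Y = distr (uniform_measure ?L (SUT_selection \<tau>)) borel (SUT_location_scale \<xi> \<Omega>)"
    using assms(4) by (simp add: SUT_eq)
  moreover have "prob_space (distr M borel Y)"
    using assms(1) by (simp add: prob_space.prob_space_distr)
  ultimately have selection: "emeasure ?L (SUT_selection \<tau>) \<noteq> 0" "emeasure ?L (SUT_selection \<tau>) \<noteq> \<infinity>"
    by (auto dest: prob_space_distr_uniform_measureD)
  have "{x \<in> space M. \<forall>i. vfst (Y x) $ i > 0} = Y -` ?B \<inter> space M"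
    by auto
  then have "distr (uniform_measure M {x \<in> space M. \<forall>i. vfst (Y x) $ i > 0}) borel (\<lambda>x. vsnd (Y x))
      = distr (uniform_measure ?L (SUT_selection \<tau> \<inter> SUT_location_scale \<xi> \<Omega> -` ?B)) borel
          (vsnd \<circ> SUT_location_scale \<xi> \<Omega>)"
    using distr_uniform_measure_preimage[OF law _ _ _ _ _ selection, of vsnd borel ?B]
    by (simp add: comp_def)
  also have "\<dots> = distr (uniform_measure ?L (reindex_vec sum_assoc -` SUT_selection ?\<tau>')) borel
          (SUT_location_scale (vsnd \<xi>) (blk22 \<Omega>) \<circ> reindex_vec sum_assoc)"
    using assms(3) by (simp add: SUT_selection_reindex_sum_assoc SUT_location_scale_reindex_sum_assoc
        pos_def_mat_diag_pos SUT_params_def)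
  also have "\<dots> = distr (uniform_measure (distr ?L borel (reindex_vec sum_assoc)) (SUT_selection ?\<tau>')) borel
          (SUT_location_scale (vsnd \<xi>) (blk22 \<Omega>))"
    by (simp add: uniform_measure_distr distr_distr cong: measurable_cong_sets)
  finally show ?thesis
    using assms(3) by (simp add: distr_SUT_latent_reindex_sum_assoc SUT_eq)
qed

end
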